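(* Define the generating function $f(\lambda,\xi)=\sum_{n\ge-4}\xi^{n-2}f_{1-n}(\lambda)$. Then $$f(\lambda,\xi)=\Big(\frac\lambda\xi\Big)^6\frac{\varphi_\lambda(\lambda)}{\lambda-\xi}+\frac{\varphi_\xi(\xi)^2}{\varphi(\xi)-\varphi(\lambda)},$$ where $\frac1{\lambda-\xi}$ is expanded as $\sum_{m\ge0}\xi^m\lambda^{-m-1}$ and $\frac1{\varphi(\xi)-\varphi(\lambda)}$ as $\sum_{k\ge0}\varphi(\lambda)^k\varphi(\xi)^{-k-1}$. Moreover, writing $f(\lambda,\xi)=\sum_{i\ge1}f^{(i)}(\xi)\lambda^i$, one has $$f^{(1)}=-\varphi_\xi(\xi)^2,\qquad f^{(2)}=-\varphi_\xi(\xi)^2\varphi(\xi),\qquad f^{(3)}=\varphi_\xi(\xi)^2\big(\varphi^{(1)}-\varphi(\xi)^2\big).$$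
   Context: Let $\varphi^{(1)},\varphi^{(2)},\dots$ be independent variables, $\varphi(\lambda)=1/\lambda+\sum_{k\ge1}\varphi^{(k)}\lambda^k$ and $\varphi(\xi)=1/\xi+\sum_{k\ge1}\varphi^{(k)}\xi^k$ (same coefficients, two formal parameters $\lambda,\xi$), $\varphi_\lambda=d\varphi(\lambda)/d\lambda$, $\varphi_\xi=d\varphi(\xi)/d\xi$. Notation $\mathfrak P_\varphi$: with $w=1/\varphi(\lambda)=\lambda+O(\lambda^3)$, any Laurent series $F$ in $\lambda$ with finitely many negative powers is uniquely $F=\sum_{k\le m}c_k\varphi(\lambda)^k$ with $c_k$ independent of $\lambda$; $\mathfrak P_\varphi F=F-\sum_{k=0}^mc_k\varphi(\lambda)^k$ (a power series in $\lambda$ without constant term). For $n\in\mathbb Z$, $f_n(\lambda)=\mathfrak P_\varphi(\lambda^n\varphi_\lambda)$. Identities are understood in the ring of formal series in $\xi$ with powers bounded below whose coefficients are Laurent series in $\lambda$ with finitely many negative powers; $f^{(i)}(\xi)=\sum_{n\ge-4}\xi^{n-2}\,[\lambda^i]f_{1-n}$. *)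

theory Defs
  imports "HOL-Computational_Algebra.Formal_Laurent_Series"
begin

text \<open>Polymorphic in the coefficient ring, so it can be used both as phi(lambda)
  (coefficients c k) and as phi(xi) over the ring of Laurent series in lambda
  (coefficients fls_const (c k)).\<close>
definition phi :: "(nat \<Rightarrow> 'a::comm_ring_1) \<Rightarrow> 'a fls" where
  "phi c = fls_X_inv + fps_to_fls (Abs_fps (\<lambda>n. if n = 0 then 0 else c n))"

definition phi_nonneg_part :: "(nat \<Rightarrow> 'a::field) \<Rightarrow> 'a fls \<Rightarrow> 'a fls" where
  "phi_nonneg_part c F = (THE p. (\<exists>(N::nat) (d::nat \<Rightarrow> 'a).
       p = (\<Sum>k\<le>N. fls_const (d k) * phi c ^ k)) \<and>
       (F - p = 0 \<or> fls_subdegree (F - p) \<ge> 1))"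

definition phi_proj :: "(nat \<Rightarrow> 'a::field) \<Rightarrow> 'a fls \<Rightarrow> 'a fls" where
  "phi_proj c F = F - phi_nonneg_part c F"

definition fn_ser :: "(nat \<Rightarrow> 'a::field) \<Rightarrow> int \<Rightarrow> 'a fls" where
  "fn_ser c n = phi_proj c (fls_X_intpow n * fls_deriv (phi c))"

text \<open>Generating function f(lambda,xi) = sum_{n>=-4} xi^(n-2) f_{1-n}(lambda),
  an element of the ring of Laurent series in xi over Laurent series in lambda.
  The coefficient of xi^j (j >= -6) is f_{-1-j} = f_{5-m} with m = j + 6.\<close>
definition gen_f :: "(nat \<Rightarrow> 'a::field) \<Rightarrow> 'a fls fls" where
  "gen_f c = fls_shift 6 (fps_to_fls (Abs_fps (\<lambda>m. fn_ser c (5 - int m))))"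

definition f_coef :: "(nat \<Rightarrow> 'a::field) \<Rightarrow> int \<Rightarrow> 'a fls" where
  "f_coef c i = fls_shift 6 (fps_to_fls (Abs_fps (\<lambda>m. fls_nth (fn_ser c (5 - int m)) i)))"

end

theory Submission
  imports Defs
begin

text \<open>Write \<open>w = 1/\<phi>\<close>. Since \<open>\<phi>\<close> has a simple pole, the residue pairing
  \<open>res(\<phi>^k \<phi>' w^(i+1))\<close> is \<open>-1\<close> for \<open>k = i\<close> and \<open>0\<close> otherwise (for \<open>k \<noteq> i\<close> the integrand
  is a derivative). Hence the polynomial part of any \<open>F\<close> in powers of \<open>\<phi>\<close> is
  \<open>-\<Sum>k res(F \<phi>' w^(k+1)) \<phi>^k\<close>: after subtracting it, \<open>F\<close> pairs to zero with every
  \<open>\<phi>' w^(i+1)\<close>, which forbids a lowest coefficient at a nonpositive power. For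
  \<open>F = \<lambda>^(-1-j) \<phi>'\<close> one has \<open>res(F \<phi>' w^(k+1)) = [\<lambda>^j] \<phi>'^2 w^(k+1)\<close>, so
  \<open>\<Sum>k res(F \<phi>' w^(k+1)) \<phi>^k\<close> is precisely the \<open>\<xi>^j\<close>-coefficient of
  \<open>\<phi>'(\<xi>)^2/(\<phi>(\<xi>) - \<phi>(\<lambda>))\<close> expanded geometrically in \<open>\<phi>(\<lambda>)/\<phi>(\<xi>)\<close>; the remaining term \<open>\<lambda>^(-1-j) \<phi>'\<close> is the \<open>\<xi>^j\<close>-coefficient of the
  first summand. Finally, \<open>f\<^sub>n = P\<^sub>\<phi> F\<close> has no nonpositive powers of \<open>\<lambda>\<close> and pairs
  with \<open>\<phi>' \<phi>^m\<close> as \<open>F\<close> does; for \<open>m = 0, 1, 2\<close> these pairings form a triangular system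
  for its coefficients at \<open>\<lambda>, \<lambda>^2, \<lambda>^3\<close>.\<close>

unbundle fps_syntax

lemma sum_int_atLeastAtMost_top:
  fixes m n :: int
  assumes "m \<le> n"
  shows "sum f {m..n} = f n + sum f {m..n - 1}"
proof -
  have "{m..n} = insert n {m..n - 1}" using assms by auto
  then show ?thesis by simp
qed

lemma fls_times_nth_lower_bounds:
  fixes f g :: "'a::semiring_0 fls"
  assumes "\<forall>n<a. f $$ n = 0" and "\<forall>n<b. g $$ n = 0"
  shows "(f * g) $$ n = (\<Sum>i=a..n-b. f $$ i * g $$ (n - i))"
proof (cases "f = 0 \<or> g = 0")
  case False
  then have "a \<le> fls_subdegree f" "b \<le> fls_subdegree g"
    using assms by (auto intro: fls_subdegree_geI)
  then have "(\<Sum>i=a..n-b. f $$ i * g $$ (n - i))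
      = (\<Sum>i=fls_subdegree f..n - fls_subdegree g. f $$ i * g $$ (n - i))"
    by (intro sum.mono_neutral_right) auto
  then show ?thesis by (simp add: fls_times_nth(2))
qed auto

lemma fls_eq_0_or_subdegree_pos_iff:
  "(f = 0 \<or> 1 \<le> fls_subdegree f) \<longleftrightarrow> (\<forall>n\<le>0. f $$ n = 0)"
proof
  show "f = 0 \<or> 1 \<le> fls_subdegree f \<Longrightarrow> \<forall>n\<le>0. f $$ n = 0" by auto
  show "\<forall>n\<le>0. f $$ n = 0 \<Longrightarrow> f = 0 \<or> 1 \<le> fls_subdegree f"
    by (cases "f = 0") (auto intro: fls_subdegree_geI)
qed

section \<open>Residue pairing against a series with a simple pole\<close>

lemma fls_residue_power_times_deriv:
  fixes p :: "'a::field_char_0 fls"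
  shows "fls_residue (p ^ m * fls_deriv p) = 0"
proof -
  have "fls_deriv (p ^ Suc m) = of_nat (Suc m) * (p ^ m * fls_deriv p)"
    by (simp only: fls_deriv_power diff_Suc_1 mult.assoc)
  then have "fls_residue (of_nat (Suc m) * (p ^ m * fls_deriv p)) = 0"
    by (metis fls_residue_deriv)
  then show ?thesis by (simp add: fls_of_nat del: of_nat_Suc)
qed

lemma fls_residue_deriv_times_inverse_power:
  fixes p :: "'a::field_char_0 fls"
  shows "fls_residue (fls_deriv p * inverse p ^ Suc (Suc m)) = 0"
proof -
  have "fls_deriv p * inverse p ^ Suc (Suc m) = - (inverse p ^ m * fls_deriv (inverse p))"
    by (simp add: fls_inverse_deriv power2_eq_square mult_ac)
  then show ?thesis using fls_residue_power_times_deriv[of "inverse p" m] by simp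
qed

lemma fls_residue_power_deriv_inverse_power:
  fixes p :: "'a::field_char_0 fls"
  assumes "p \<noteq> 0"
  shows "fls_residue (p ^ k * fls_deriv p * inverse p ^ Suc i)
    = (if k = i then of_int (fls_subdegree p) else 0)"
proof -
  have cancel: "p ^ n * inverse p ^ n = 1" for n
    using assms by (simp flip: power_mult_distrib)
  consider "k = i" | m where "k = i + Suc m" | m where "i = k + Suc m"
    by (cases k i rule: linorder_cases) (auto dest!: less_imp_Suc_add)
  then show ?thesis
  proof cases
    case 1
    then have "p ^ k * fls_deriv p * inverse p ^ Suc i
        = fls_deriv p * inverse p * (p ^ k * inverse p ^ k)"
      by (simp add: mult_ac)
    then show ?thesis
      using 1 by (simp only: cancel mult_1_right fls_residue_deriv_times_inverse_eq_subdegree(1))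
        simp
  next
    case 2
    then have "p ^ k * fls_deriv p * inverse p ^ Suc i
        = p ^ m * fls_deriv p * (p ^ Suc i * inverse p ^ Suc i)"
      by (simp add: power_add mult_ac)
    then show ?thesis
      using 2 by (simp only: cancel mult_1_right fls_residue_power_times_deriv) simp
  next
    case 3
    then have "p ^ k * fls_deriv p * inverse p ^ Suc i
        = fls_deriv p * inverse p ^ Suc (Suc m) * (p ^ k * inverse p ^ k)"
      by (simp add: power_add mult_ac)
    then show ?thesis
      using 3 by (simp only: cancel mult_1_right fls_residue_deriv_times_inverse_power) simp
  qed
qed

lemma fls_power_nth_below:
  fixes p :: "'a::idom fls"
  assumes "fls_subdegree p = -1" and "n < - int k"
  shows "(p ^ k) $$ n = 0"
  using assms by (simp add: fls_subdegree_pow)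

lemma fls_power_nth_subdegree:
  fixes p :: "'a::idom fls"
  assumes "fls_subdegree p = -1"
  shows "(p ^ k) $$ (- int k) = (p $$ (-1)) ^ k"
  using fls_pow_base[of p k] assms by simp

lemma fls_subdegree_deriv_simple_pole:
  fixes p :: "'a::field_char_0 fls"
  assumes "fls_subdegree p = -1"
  shows "fls_subdegree (fls_deriv p) = -2"
proof -
  have "p \<noteq> 0" using assms by auto
  then show ?thesis
    using assms nth_fls_subdegree_nonzero[of p] by (subst fls_deriv_subdegree') auto
qed

lemma fls_const_power_sum_pad:
  assumes "N \<le> L"
  shows "(\<Sum>k\<le>N. fls_const (e k) * p ^ k)
    = (\<Sum>k\<le>L. fls_const (if k \<le> N then e k else 0) * p ^ k)"
  using assms by (intro sum.mono_neutral_cong_left) auto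

lemma fls_const_power_sum_eq_0:
  fixes p :: "'a::idom fls"
  assumes p: "fls_subdegree p = -1"
    and vanish: "\<forall>n\<le>0. (\<Sum>k\<le>N. fls_const (e k) * p ^ k) $$ n = 0"
  shows "(\<Sum>k\<le>N. fls_const (e k) * p ^ k) = 0"
  using vanish
proof (induction N)
  case 0
  then show ?case by (auto dest: spec[of _ 0])
next
  case (Suc N)
  have "p \<noteq> 0" using p by auto
  then have lead: "p $$ (-1) \<noteq> 0" using p nth_fls_subdegree_nonzero by fastforce
  have "(\<Sum>k\<le>Suc N. fls_const (e k) * p ^ k) $$ (- int (Suc N))
      = e (Suc N) * (p $$ (-1)) ^ Suc N"
    using p by (simp add: fls_nth_sum fls_power_nth_below fls_power_nth_subdegree
        del: of_nat_Suc power_Suc)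
  moreover have "(\<Sum>k\<le>Suc N. fls_const (e k) * p ^ k) $$ (- int (Suc N)) = 0"
    using Suc.prems by simp
  ultimately have "e (Suc N) = 0" using lead by simp
  then show ?case using Suc by simp
qed

lemma fls_add_residue_expansion_nth_nonpos:
  fixes p F :: "'a::field_char_0 fls"
  assumes p: "fls_subdegree p = -1" and F: "\<forall>n < - int K. F $$ n = 0" and "n \<le> 0"
  shows "(F + (\<Sum>k\<le>K. fls_const (fls_residue (F * fls_deriv p * inverse p ^ Suc k)) * p ^ k))
    $$ n = 0"
proof (rule ccontr)
  define a where "a k = fls_residue (F * fls_deriv p * inverse p ^ Suc k)" for k
  define G where "G = F + (\<Sum>k\<le>K. fls_const (a k) * p ^ k)"
  assume "\<not> ?thesis"
  then have "G $$ n \<noteq> 0" by (simp add: G_def a_def)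
  then have "G \<noteq> 0" by auto
  define s where "s = fls_subdegree G"
  have "s \<le> 0" using \<open>G $$ n \<noteq> 0\<close> \<open>n \<le> 0\<close> fls_subdegree_leI unfolding s_def by fastforce
  have "- int K \<le> s" unfolding s_def
  proof (rule fls_subdegree_geI[OF \<open>G \<noteq> 0\<close>])
    fix m assume "m < - int K"
    then show "G $$ m = 0" using F p by (simp add: G_def fls_nth_sum fls_power_nth_below)
  qed
  define i where "i = nat (- s)"
  have "i \<le> K" and s_eq: "s = - int i" using \<open>s \<le> 0\<close> \<open>- int K \<le> s\<close> by (auto simp: i_def)
  have "p \<noteq> 0" using p by auto
  \<comment> \<open>Pairing with \<open>Y\<close> cancels \<open>F\<close> against the \<open>i\<close>-th summand,
    yet it sees the lowest coefficient of \<open>G\<close>.\<close>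
  define Y where "Y = fls_deriv p * inverse p ^ Suc i"
  have pair: "fls_residue (p ^ k * Y) = (if k = i then -1 else 0)" for k
    using fls_residue_power_deriv_inverse_power[OF \<open>p \<noteq> 0\<close>, of k i] p
    by (simp add: Y_def mult.assoc)
  have "fls_residue (G * Y) = fls_residue (F * Y) + (\<Sum>k\<le>K. a k * fls_residue (p ^ k * Y))"
    by (simp add: G_def distrib_right sum_distrib_right fls_nth_sum mult.assoc)
  also have "\<dots> = fls_residue (F * Y) - a i"
    using \<open>i \<le> K\<close> by (simp only: pair) (simp add: if_distrib cong: if_cong)
  also have "\<dots> = 0"
    by (simp add: a_def Y_def mult.assoc)
  finally have "fls_residue (G * Y) = 0" .
  have "fls_subdegree (fls_deriv p) = -2" by (rule fls_subdegree_deriv_simple_pole[OF p])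
  then have "fls_deriv p \<noteq> 0" by auto
  then have "Y \<noteq> 0" and "fls_subdegree Y = -1 - s"
    using \<open>p \<noteq> 0\<close> p s_eq \<open>fls_subdegree (fls_deriv p) = -2\<close>
    by (simp_all add: Y_def fls_subdegree_pow)
  then have "fls_residue (G * Y) = G $$ s * Y $$ fls_subdegree Y"
    using fls_times_base[of G Y] unfolding s_def by simp
  moreover have "G $$ s * Y $$ fls_subdegree Y \<noteq> 0"
    using \<open>G \<noteq> 0\<close> \<open>Y \<noteq> 0\<close> unfolding s_def by simp
  ultimately show False using \<open>fls_residue (G * Y) = 0\<close> by simp
qed

section \<open>The projection \<open>P\<^sub>\<phi>\<close> and the series \<open>f\<^sub>n\<close>\<close>

lemma phi_nth: "phi c $$ n = (if n = -1 then 1 else if n \<le> 0 then 0 else c (nat n))"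
  unfolding phi_def by (auto simp: fps_to_fls_nth)

lemma phi_subdegree [simp]: "fls_subdegree (phi c) = -1"
  by (rule fls_subdegree_eqI) (auto simp: phi_nth)

lemma phi_nonzero [simp]: "phi c \<noteq> 0"
  by (rule fls_nonzeroI[of _ "-1"]) (simp add: phi_nth)

lemma fls_deriv_phi_subdegree [simp]:
  "fls_subdegree (fls_deriv (phi c) :: 'a::{comm_ring_1,ring_char_0} fls) = -2"
  by (rule fls_subdegree_eqI) (auto simp: phi_nth)

lemma fls_deriv_phi_nonzero [simp]: "fls_deriv (phi c :: 'a::{comm_ring_1,ring_char_0} fls) \<noteq> 0"
  by (rule fls_nonzeroI[of _ "-2"]) (simp add: phi_nth)

lemma phi_deriv_principal_nth:
  fixes c :: "nat \<Rightarrow> 'a::field_char_0"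
  shows "fls_deriv (phi c) $$ (-2) = -1" "fls_deriv (phi c) $$ (-1) = 0"
    "(fls_deriv (phi c) * phi c) $$ (-3) = -1" "(fls_deriv (phi c) * phi c) $$ (-2) = 0"
    "(fls_deriv (phi c) * phi c ^ 2) $$ (-4) = -1" "(fls_deriv (phi c) * phi c ^ 2) $$ (-3) = 0"
    "(fls_deriv (phi c) * phi c ^ 2) $$ (-2) = - c 1"
  by (simp_all add: fls_times_nth(2) sum_int_atLeastAtMost_top phi_nth power2_eq_square)

lemma phi_nonneg_part_eqI:
  fixes F :: "'a::field fls"
  assumes "\<forall>n\<le>0. (F - (\<Sum>k\<le>N. fls_const (e k) * phi c ^ k)) $$ n = 0"
  shows "phi_nonneg_part c F = (\<Sum>k\<le>N. fls_const (e k) * phi c ^ k)" (is "_ = ?p")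
  unfolding phi_nonneg_part_def
proof (rule the_equality)
  show "(\<exists>N' d. ?p = (\<Sum>k\<le>N'. fls_const (d k) * phi c ^ k))
    \<and> (F - ?p = 0 \<or> 1 \<le> fls_subdegree (F - ?p))"
    using assms by (auto simp only: fls_eq_0_or_subdegree_pos_iff)
next
  fix q
  assume "(\<exists>M d. q = (\<Sum>k\<le>M. fls_const (d k) * phi c ^ k))
    \<and> (F - q = 0 \<or> 1 \<le> fls_subdegree (F - q))"
  then obtain M d where q: "q = (\<Sum>k\<le>M. fls_const (d k) * phi c ^ k)"
    and "\<forall>n\<le>0. (F - q) $$ n = 0"
    by (auto simp only: fls_eq_0_or_subdegree_pos_iff)
  define E where "E k = (if k \<le> N then e k else 0) - (if k \<le> M then d k else 0)" for k
  have diff: "?p - q = (\<Sum>k\<le>max N M. fls_const (E k) * phi c ^ k)"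
    unfolding q E_def
    by (simp add: fls_const_power_sum_pad[of N "max N M"] fls_const_power_sum_pad[of M "max N M"]
        fls_minus_const[symmetric] left_diff_distrib sum_subtractf[symmetric] del: fls_minus_const)
  have "\<forall>n\<le>0. (\<Sum>k\<le>max N M. fls_const (E k) * phi c ^ k) $$ n = 0"
    using assms \<open>\<forall>n\<le>0. (F - q) $$ n = 0\<close> by (simp flip: diff)
  then have "(\<Sum>k\<le>max N M. fls_const (E k) * phi c ^ k) = 0"
    by (rule fls_const_power_sum_eq_0[OF phi_subdegree])
  with diff show "q = ?p" by simp
qed

lemma phi_proj_eq:
  fixes F :: "'a::field_char_0 fls"
  assumes "\<forall>n < - int K. F $$ n = 0"
  shows "phi_proj c F = F + (\<Sum>k\<le>K.
    fls_const (fls_residue (F * fls_deriv (phi c) * inverse (phi c) ^ Suc k)) * phi c ^ k)"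
proof -
  define r where "r k = fls_residue (F * fls_deriv (phi c) * inverse (phi c) ^ Suc k)" for k
  have "phi_nonneg_part c F = (\<Sum>k\<le>K. fls_const (- r k) * phi c ^ k)"
  proof (rule phi_nonneg_part_eqI, intro allI impI)
    fix n :: int assume "n \<le> 0"
    then show "(F - (\<Sum>k\<le>K. fls_const (- r k) * phi c ^ k)) $$ n = 0"
      using fls_add_residue_expansion_nth_nonpos[OF phi_subdegree assms]
      by (simp add: r_def sum_negf fls_minus_const[symmetric] del: fls_minus_const)
  qed
  then show ?thesis
    by (simp add: phi_proj_def r_def sum_negf fls_minus_const[symmetric] del: fls_minus_const)
qed

lemma phi_proj_nth_nonpos:
  fixes F :: "'a::field_char_0 fls"
  assumes "n \<le> 0"
  shows "phi_proj c F $$ n = 0"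
  using phi_proj_eq[of "nat (- fls_subdegree F)" F c]
    fls_add_residue_expansion_nth_nonpos[OF phi_subdegree _ assms, of "nat (- fls_subdegree F)" F]
  by simp

lemma fls_residue_phi_proj_times:
  fixes F :: "'a::field_char_0 fls"
  shows "fls_residue (phi_proj c F * (fls_deriv (phi c) * phi c ^ m))
    = fls_residue (F * (fls_deriv (phi c) * phi c ^ m))"
proof -
  have "fls_residue (phi c ^ k * (fls_deriv (phi c) * phi c ^ m)) = 0" for k
    using fls_residue_power_times_deriv[of "phi c" "k + m"]
    by (simp add: power_add mult_ac)
  then show ?thesis
    using phi_proj_eq[of "nat (- fls_subdegree F)" F c]
    by (simp add: distrib_right sum_distrib_right fls_nth_sum mult.assoc)
qed

lemma fn_ser_eq:
  fixes c :: "nat \<Rightarrow> 'a::field_char_0"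
  shows "fn_ser c (-1-j) = fls_X_intpow (-1-j) * fls_deriv (phi c)
    + (\<Sum>k\<le>nat (j+3).
        fls_const ((fls_deriv (phi c) ^ 2 * inverse (phi c) ^ Suc k) $$ j) * phi c ^ k)"
proof -
  have "\<forall>n < - int (nat (j+3)). (fls_X_intpow (-1-j) * fls_deriv (phi c)) $$ n = 0"
    by (auto simp: fls_shifted_times_simps phi_nth)
  moreover have "fls_residue (fls_X_intpow (-1-j) * fls_deriv (phi c) * fls_deriv (phi c) * Y)
      = (fls_deriv (phi c) ^ 2 * Y) $$ j" for Y
    by (simp add: fls_shifted_times_simps power2_eq_square mult.assoc)
  ultimately show ?thesis
    unfolding fn_ser_def by (simp add: phi_proj_eq[where K = "nat (j+3)"] mult.assoc)
qed

lemma fn_ser_nth_nonpos: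
  fixes c :: "nat \<Rightarrow> 'a::field_char_0"
  shows "n \<le> 0 \<Longrightarrow> fn_ser c m $$ n = 0"
  unfolding fn_ser_def by (rule phi_proj_nth_nonpos)

lemma fls_residue_fn_ser_times:
  fixes c :: "nat \<Rightarrow> 'a::field_char_0"
  shows "fls_residue (fn_ser c (-1-j) * (fls_deriv (phi c) * phi c ^ m))
    = (fls_deriv (phi c) ^ 2 * phi c ^ m) $$ j"
proof -
  have "fls_residue (fn_ser c (-1-j) * (fls_deriv (phi c) * phi c ^ m))
      = fls_residue (fls_X_intpow (-1-j) * fls_deriv (phi c) * (fls_deriv (phi c) * phi c ^ m))"
    unfolding fn_ser_def by (rule fls_residue_phi_proj_times)
  then show ?thesis by (simp add: fls_shifted_times_simps power2_eq_square mult.assoc)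
qed

lemma fls_nth_pos_eq_residue_times_phi_deriv:
  fixes G :: "'a::field_char_0 fls"
  assumes "\<And>n. n \<le> 0 \<Longrightarrow> G $$ n = 0"
  shows "G $$ 1 = - fls_residue (G * (fls_deriv (phi c) * phi c ^ 0))"
    and "G $$ 2 = - fls_residue (G * (fls_deriv (phi c) * phi c ^ 1))"
    and "G $$ 3 = - fls_residue (G * (fls_deriv (phi c) * phi c ^ 2)) - c 1 * G $$ 1"
proof -
  have G: "\<forall>n<1. G $$ n = 0" using assms by auto
  have low: "\<forall>n < -2 - int m. (fls_deriv (phi c) * phi c ^ m) $$ n = 0" for m
    by (auto simp: fls_subdegree_pow)
  have res: "fls_residue (G * (fls_deriv (phi c) * phi c ^ m))
      = (\<Sum>i=1..1 + int m. G $$ i * (fls_deriv (phi c) * phi c ^ m) $$ (-1 - i))" for m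
    using fls_times_nth_lower_bounds[OF G low[of m], of "-1"] by simp
  show "G $$ 1 = - fls_residue (G * (fls_deriv (phi c) * phi c ^ 0))"
    "G $$ 2 = - fls_residue (G * (fls_deriv (phi c) * phi c ^ 1))"
    "G $$ 3 = - fls_residue (G * (fls_deriv (phi c) * phi c ^ 2)) - c 1 * G $$ 1"
    unfolding res by (simp_all add: sum_int_atLeastAtMost_top phi_deriv_principal_nth phi_nth)
qed

lemma fn_ser_nth_1_2_3:
  fixes c :: "nat \<Rightarrow> 'a::field_char_0"
  shows "fn_ser c (-1-j) $$ 1 = - (fls_deriv (phi c) ^ 2) $$ j"
    and "fn_ser c (-1-j) $$ 2 = - (fls_deriv (phi c) ^ 2 * phi c) $$ j"
    and "fn_ser c (-1-j) $$ 3
      = c 1 * (fls_deriv (phi c) ^ 2) $$ j - (fls_deriv (phi c) ^ 2 * phi c ^ 2) $$ j"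
  using fls_nth_pos_eq_residue_times_phi_deriv[OF fn_ser_nth_nonpos, of c "-1-j" c]
  by (simp_all only: fls_residue_fn_ser_times) (simp_all add: algebra_simps)

section \<open>Series in two variables\<close>

lemma inverse_lambda_minus_xi_nth:
  "inverse (fls_const fls_X - fls_X :: 'a::field fls fls) $$ n
    = (if n < 0 then 0 else fls_X_intpow (- n - 1))"
proof -
  define S :: "'a fls fls" where "S = fps_to_fls (Abs_fps (\<lambda>m. fls_X_intpow (- int m - 1)))"
  have S_nth: "S $$ n = (if n < 0 then 0 else fls_X_intpow (- n - 1))" for n
    by (simp add: S_def fps_to_fls_nth)
  have X: "(fls_X :: 'a fls) = fls_X_intpow 1" by (simp add: fls_X_conv_shift_1)
  have "(fls_const fls_X - fls_X) * S = 1"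
  proof (rule fls_eqI)
    fix n
    show "((fls_const fls_X - fls_X) * S) $$ n = (1 :: 'a fls fls) $$ n"
      by (simp add: left_diff_distrib fls_X_times_conv_shift S_nth X fls_shifted_times_simps)
  qed
  then show ?thesis by (simp add: inverse_unique S_nth)
qed

lemma lambda_over_xi_power_times_inverse_nth:
  fixes f :: "'a::field fls"
  shows "((fls_const fls_X / fls_X) ^ 6 * fls_const f * inverse (fls_const fls_X - fls_X)) $$ j
    = (if j < -6 then 0 else fls_X_intpow (-1-j) * f)"
proof -
  have "(fls_const fls_X / fls_X) ^ 6 = fls_shift 6 (fls_const (fls_X ^ 6) :: 'a fls fls)"
    by (simp add: divide_inverse fls_inverse_X power_mult_distrib fls_X_inv_power_times_conv_shift
        fls_const_power)
  then show ?thesis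
    by (simp add: inverse_lambda_minus_xi_nth fls_X_power_conv_shift_1 fls_shifted_times_simps
        fls_const_mult_const[symmetric] mult.assoc add.commute)
qed

definition lambda_to_xi :: "'a::field fls \<Rightarrow> 'a fls fls" where
  "lambda_to_xi f = Abs_fls (\<lambda>n. fls_const (f $$ n))"

lemma lambda_to_xi_nth [simp]: "lambda_to_xi f $$ n = fls_const (f $$ n)"
proof -
  have "\<forall>\<^sub>\<infinity>n::nat. fls_const (f $$ (- int n)) = 0"
    by (rule MOST_mono[of "\<lambda>n. f $$ (- int n) = 0"]) simp_all
  then show ?thesis unfolding lambda_to_xi_def by simp
qed

lemma lambda_to_xi_0 [simp]: "lambda_to_xi 0 = 0"
  by (simp add: fls_eq_iff)

lemma lambda_to_xi_eq_0_iff [simp]: "lambda_to_xi f = 0 \<longleftrightarrow> f = 0"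
  by (auto simp: fls_eq_iff)

lemma lambda_to_xi_subdegree [simp]: "fls_subdegree (lambda_to_xi f) = fls_subdegree f"
  by (cases "f = 0") (auto intro: fls_subdegree_eqI)

lemma lambda_to_xi_mult [simp]: "lambda_to_xi (f * g) = lambda_to_xi f * lambda_to_xi g"
proof -
  have fls_const_sum: "fls_const (sum h A) = (\<Sum>i\<in>A. fls_const (h i))"
    for h :: "int \<Rightarrow> 'a" and A
    by (induction A rule: infinite_finite_induct) (auto simp flip: fls_plus_const)
  show ?thesis
    by (rule fls_eqI) (simp add: fls_times_nth(1) fls_const_sum fls_const_mult_const)
qed

lemma lambda_to_xi_1 [simp]: "lambda_to_xi 1 = 1"
  by (simp add: fls_eq_iff)

lemma lambda_to_xi_power [simp]: "lambda_to_xi (f ^ n) = lambda_to_xi f ^ n"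
  by (induction n) simp_all

lemma lambda_to_xi_inverse [simp]: "lambda_to_xi (inverse f) = inverse (lambda_to_xi f)"
proof (cases "f = 0")
  case False
  then have "lambda_to_xi f * lambda_to_xi (inverse f) = 1"
    by (simp flip: lambda_to_xi_mult)
  then show ?thesis by (simp add: inverse_unique)
qed simp

lemma lambda_to_xi_deriv: "lambda_to_xi (fls_deriv f) = fls_deriv (lambda_to_xi f)"
  by (auto simp: fls_eq_iff fls_of_int fls_const_mult_const)

lemma lambda_to_xi_phi: "lambda_to_xi (phi c) = phi (\<lambda>k. fls_const (c k))"
  by (auto simp: fls_eq_iff phi_nth)

lemma inverse_one_minus_eq_geometric_sum:
  fixes q :: "'a::field"
  assumes "q \<noteq> 1"
  shows "inverse (1 - q) = (\<Sum>i<L. q ^ i) + q ^ L * inverse (1 - q)"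
proof -
  have "inverse (1 - q) * (1 - q ^ L) = (\<Sum>i<L. q ^ i)"
    using assms by (simp add: one_diff_power_eq mult.assoc[symmetric])
  then show ?thesis by (simp add: algebra_simps)
qed

lemma fls_deriv_power2_times_inverse_sub_const_nth:
  fixes p :: "'a::field_char_0 fls"
  assumes p: "fls_subdegree p = -1"
  defines "P \<equiv> lambda_to_xi p"
  shows "(fls_deriv P ^ 2 * inverse (P - fls_const p)) $$ j
    = (\<Sum>k\<le>nat (j+3). fls_const ((fls_deriv p ^ 2 * inverse p ^ Suc k) $$ j) * p ^ k)"
proof -
  \<comment> \<open>\<open>q = \<phi>(\<lambda>)/\<phi>(\<xi>)\<close> has order 1 in \<open>\<xi>\<close>, so the tail \<open>q^L/(1 - q)\<close>
    of the geometric series does not reach \<open>\<xi>^j\<close>.\<close>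
  define q where "q = fls_const p * inverse P"
  define L where "L = Suc (nat (j+3))"
  have "p \<noteq> 0" using p by auto
  then have "P \<noteq> 0" by (simp add: P_def)
  have "fls_subdegree (fls_deriv p) = -2" by (rule fls_subdegree_deriv_simple_pole[OF p])
  then have "fls_deriv p \<noteq> 0" by auto
  have "q \<noteq> 0" and "fls_subdegree q = 1"
    using \<open>p \<noteq> 0\<close> p by (simp_all add: q_def P_def flip: lambda_to_xi_inverse)
  then have "(1 - q) $$ 0 = 1" by simp
  then have "q \<noteq> 1" and "0 \<le> fls_subdegree (inverse (1 - q))"
    using fls_subdegree_leI[of "1 - q" 0] by auto
  have "P - fls_const p = P * (1 - q)"
    using \<open>P \<noteq> 0\<close> by (simp add: q_def right_diff_distrib)
  then have "inverse (P - fls_const p) = inverse P * inverse (1 - q)"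
    by (simp add: inverse_mult_distrib)
  also have "inverse (1 - q) = (\<Sum>i<L. q ^ i) + q ^ L * inverse (1 - q)"
    using \<open>q \<noteq> 1\<close> by (rule inverse_one_minus_eq_geometric_sum)
  finally have expand: "fls_deriv P ^ 2 * inverse (P - fls_const p)
      = (\<Sum>i<L. fls_deriv P ^ 2 * inverse P * q ^ i)
        + fls_deriv P ^ 2 * inverse P * q ^ L * inverse (1 - q)"
    by (simp add: algebra_simps sum_distrib_left)
  have "fls_subdegree (fls_deriv P ^ 2 * inverse P * q ^ L) = int L - 3"
    using \<open>fls_deriv p \<noteq> 0\<close> \<open>P \<noteq> 0\<close> \<open>q \<noteq> 0\<close> \<open>fls_subdegree q = 1\<close>
      \<open>fls_subdegree (fls_deriv p) = -2\<close> p
    by (simp add: P_def fls_subdegree_pow flip: lambda_to_xi_deriv lambda_to_xi_inverse)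
  then have "(fls_deriv P ^ 2 * inverse P * q ^ L * inverse (1 - q)) $$ j = 0"
    using \<open>0 \<le> fls_subdegree (inverse (1 - q))\<close>
    by (intro fls_times_nth_eq0) (simp add: L_def)
  moreover have "(fls_deriv P ^ 2 * inverse P * q ^ i) $$ j
      = fls_const ((fls_deriv p ^ 2 * inverse p ^ Suc i) $$ j) * p ^ i" for i
  proof -
    have "fls_deriv P ^ 2 * inverse P * q ^ i
        = fls_const (p ^ i) * lambda_to_xi (fls_deriv p ^ 2 * inverse p ^ Suc i)"
      by (simp add: P_def q_def lambda_to_xi_deriv power_mult_distrib fls_const_power mult_ac)
    then show ?thesis by (simp only: fls_mult_const_nth lambda_to_xi_nth mult.commute)
  qed
  ultimately show ?thesis
    unfolding expand by (simp add: fls_nth_sum L_def lessThan_Suc_atMost)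
qed

lemma gen_f_nth: "gen_f c $$ j = (if j < -6 then 0 else fn_ser c (-1-j))"
  unfolding gen_f_def by (auto simp: fps_to_fls_nth)

lemma f_coef_nth: "f_coef c i $$ j = (if j < -6 then 0 else fn_ser c (-1-j) $$ i)"
  unfolding f_coef_def by (auto simp: fps_to_fls_nth)

theorem gen_f_eq:
  fixes c :: "nat \<Rightarrow> 'a::field_char_0"
  shows "gen_f c = (fls_const fls_X / fls_X) ^ 6 * fls_const (fls_deriv (phi c))
      * inverse (fls_const fls_X - fls_X)
    + fls_deriv (phi (\<lambda>k. fls_const (c k))) ^ 2
      * inverse (phi (\<lambda>k. fls_const (c k)) - fls_const (phi c))"
    (is "_ = ?first + ?second")
proof (rule fls_eqI)
  fix j
  have first: "?first $$ j = (if j < -6 then 0 else fls_X_intpow (-1-j) * fls_deriv (phi c))"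
    by (rule lambda_over_xi_power_times_inverse_nth)
  have second: "?second $$ j = (\<Sum>k\<le>nat (j+3).
      fls_const ((fls_deriv (phi c) ^ 2 * inverse (phi c) ^ Suc k) $$ j) * phi c ^ k)"
    using fls_deriv_power2_times_inverse_sub_const_nth[OF phi_subdegree, of c j]
    by (simp only: lambda_to_xi_phi)
  have "(fls_deriv (phi c) ^ 2 * inverse (phi c)) $$ j = 0" if "j < -3"
    using that by (intro fls_times_nth_eq0) (simp add: fls_subdegree_pow)
  then show "gen_f c $$ j = (?first + ?second) $$ j"
    unfolding fls_plus_nth first second gen_f_nth by (simp add: fn_ser_eq)
qed

lemma f_coef_eqI:
  assumes "\<And>j. -6 \<le> j \<Longrightarrow> fn_ser c (-1-j) $$ i = F $$ j"
    and "\<And>j. j < -6 \<Longrightarrow> F $$ j = 0"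
  shows "f_coef c i = F"
  using assms by (intro fls_eqI) (simp add: f_coef_nth)

lemma f_coef_1:
  fixes c :: "nat \<Rightarrow> 'a::field_char_0"
  shows "f_coef c 1 = - (fls_deriv (phi c) ^ 2)"
  by (rule f_coef_eqI) (simp_all add: fn_ser_nth_1_2_3 fls_subdegree_pow)

lemma f_coef_2:
  fixes c :: "nat \<Rightarrow> 'a::field_char_0"
  shows "f_coef c 2 = - (fls_deriv (phi c) ^ 2 * phi c)"
  by (rule f_coef_eqI) (simp_all add: fn_ser_nth_1_2_3 fls_subdegree_pow)

lemma f_coef_3:
  fixes c :: "nat \<Rightarrow> 'a::field_char_0"
  shows "f_coef c 3 = fls_deriv (phi c) ^ 2 * (fls_const (c 1) - phi c ^ 2)"
  by (rule f_coef_eqI)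
    (simp_all add: fn_ser_nth_1_2_3 fls_subdegree_pow right_diff_distrib mult.commute)

theorem mainTheorem14:
  fixes c :: "nat \<Rightarrow> 'a::field_char_0"
  defines "lam \<equiv> (fls_const (fls_X :: 'a fls) :: 'a fls fls)"
      and "xi \<equiv> (fls_X :: 'a fls fls)"
      and "phiL \<equiv> fls_const (phi c) :: 'a fls fls"
      and "phiL' \<equiv> fls_const (fls_deriv (phi c)) :: 'a fls fls"
      and "phiX \<equiv> phi (\<lambda>k. fls_const (c k)) :: 'a fls fls"
  shows "(gen_f c = (lam / xi) ^ 6 * phiL' * inverse (lam - xi)
                   + (fls_deriv phiX) ^ 2 * inverse (phiX - phiL)) \<and>
    (f_coef c 1 = - ((fls_deriv (phi c)) ^ 2)) \<and>
    (f_coef c 2 = - ((fls_deriv (phi c)) ^ 2 * phi c)) \<and>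
    (f_coef c 3 = (fls_deriv (phi c)) ^ 2 * (fls_const (c 1) - (phi c) ^ 2))"
  unfolding assms using gen_f_eq f_coef_1 f_coef_2 f_coef_3 by blast

end
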